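(* For any frame $L$, the poset $\overline{\mathrm{IC}}(L)$ is order-isomorphic to $\{g\in\mathrm{IC}(L)\mid \boldsymbol{-1}\le g\le\boldsymbol{1}\}$.
   Context: $\mathbb{Q}$ is the rationals. The frame of extended partial reals $\mathfrak{L}(\overline{\mathbb{IR}})$ is the frame presented by generators $(r,\textsf{---})$, $(\textsf{---},s)$ ($r,s\in\mathbb{Q}$) subject to (r1) $(r,\textsf{---})\wedge(\textsf{---},s)=0$ whenever $r\ge s$; (r3) $(r,\textsf{---})=\bigvee_{s>r}(s,\textsf{---})$; (r4) $(\textsf{---},s)=\bigvee_{r<s}(\textsf{---},r)$. The frame of partial reals $\mathfrak{L}(\mathbb{IR})$ is obtained by adding the relations (r5) $\bigvee_r(r,\textsf{---})=1$ and (r6) $\bigvee_s(\textsf{---},s)=1$. $\overline{\mathrm{IC}}(L)$ (resp. $\mathrm{IC}(L)$) is the set of frame homomorphisms $\mathfrak{L}(\overline{\mathbb{IR}})\to L$ (resp. $\mathfrak{L}(\mathbb{IR})\to L$), ordered by $f\le g$ iff $f(r,\textsf{---})\le g(r,\textsf{---})$ and $g(\textsf{---},s)\le f(\textsf{---},s)$ for all $r,s\in\mathbb{Q}$. For $q\in\mathbb{Q}$, the constant $\boldsymbol{q}\in\mathrm{IC}(L)$ is given by $\boldsymbol{q}(p,\textsf{---})=1$ if $p<q$ and $0$ otherwise, $\boldsymbol{q}(\textsf{---},p)=1$ if $p>q$ and $0$ otherwise. *)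

theory Defs
  imports Main "HOL.Rat"
begin

definition frame_law :: "'a::complete_lattice itself \<Rightarrow> bool" where
  "frame_law _ \<longleftrightarrow> (\<forall>(a::'a) S. inf a (Sup S) = (SUP s\<in>S. inf a s))"

text \<open>A frame homomorphism out of a presented frame is determined by (and corresponds
  bijectively to) the images of the generators, subject to the relations holding in L.
  A pair (lo, up) represents the homomorphism f with f(r,---) = lo r and f(---,s) = up s.\<close>
type_synonym 'a genmap = "(rat \<Rightarrow> 'a) \<times> (rat \<Rightarrow> 'a)"

definition ICbar :: "('a::complete_lattice) genmap set" where
  "ICbar = {f. (\<forall>r s. s \<le> r \<longrightarrow> inf (fst f r) (snd f s) = bot)
              \<and> (\<forall>r. fst f r = Sup {fst f s | s. r < s})
              \<and> (\<forall>s. snd f s = Sup {snd f r | r. r < s})}"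

definition IC :: "('a::complete_lattice) genmap set" where
  "IC = {f. f \<in> ICbar \<and> Sup (range (fst f)) = top \<and> Sup (range (snd f)) = top}"

definition IC_le :: "('a::complete_lattice) genmap \<Rightarrow> 'a genmap \<Rightarrow> bool" where
  "IC_le f g \<longleftrightarrow> (\<forall>r. fst f r \<le> fst g r) \<and> (\<forall>s. snd g s \<le> snd f s)"

definition const_pr :: "rat \<Rightarrow> ('a::complete_lattice) genmap" where
  "const_pr q = ((\<lambda>p. if p < q then top else bot), (\<lambda>p. if q < p then top else bot))"

end

theory Submission
  imports Defs
begin

text \<open>The order isomorphism \<open>squash x = x / (1 + |x|)\<close> of \<open>\<rat>\<close> onto \<open>(-1, 1) \<inter> \<rat>\<close>
  transports an extended partial real \<open>f\<close> into the interval: push its generator values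
  forward along \<open>squash\<close>, declare \<open>(r,---)\<close> true for \<open>r \<le> -1\<close> and \<open>(---,s)\<close> true for
  \<open>s \<ge> 1\<close>, and close off under (r3) and (r4) by taking joins over strictly larger,
  resp. smaller, rationals. By density of \<open>\<rat>\<close> the result satisfies (r3) and (r4), and in a
  frame the disjointness (r1) survives the joins; (r5) and (r6) hold because the padding
  contributes \<open>1\<close>. Conversely, restricting a partial real between \<open>-1\<close> and \<open>1\<close> along
  \<open>squash\<close> inverts this construction, and both directions are monotone.\<close>

definition squash :: "rat \<Rightarrow> rat" where
  "squash x = x / (1 + \<bar>x\<bar>)"

lemma squash_strict_mono: "strict_mono squash"
proof (rule strict_monoI)
  fix x y :: rat assume "x < y"
  then show "squash x < squash y"
    using mult_neg_pos[of x "1 + 2 * y"] \<comment> \<open>the mixed-sign case\<close>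
    unfolding squash_def
    by (cases "0 \<le> x"; cases "0 \<le> y") (auto simp: divide_simps algebra_simps)
qed

lemma squash_less_iff [simp]: "squash x < squash y \<longleftrightarrow> x < y"
  using squash_strict_mono by (simp add: strict_mono_less)

lemma squash_le_iff [simp]: "squash x \<le> squash y \<longleftrightarrow> x \<le> y"
  using squash_strict_mono by (simp add: strict_mono_less_eq)

lemma range_squash: "range squash = {-1<..<1}"
proof (intro equalityI subsetI)
  fix y :: rat assume "y \<in> range squash"
  then show "y \<in> {-1<..<1}"
    unfolding squash_def by (cases "0 \<le> y") (auto simp: divide_simps)
next
  fix y :: rat assume "y \<in> {-1<..<1}"
  then have "squash (y / (1 - \<bar>y\<bar>)) = y"
    unfolding squash_def by (cases "0 \<le> y") (auto simp: divide_simps abs_if)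
  then show "y \<in> range squash" by (metis rangeI)
qed

lemma squash_bounds: "-1 < squash x" "squash x < 1"
  using range_squash by auto

definition sup_above :: "('b::linorder \<Rightarrow> 'a::complete_lattice) \<Rightarrow> 'b \<Rightarrow> 'a" where
  "sup_above F r = (SUP s\<in>{r<..}. F s)"

definition sup_below :: "('b::linorder \<Rightarrow> 'a::complete_lattice) \<Rightarrow> 'b \<Rightarrow> 'a" where
  "sup_below G s = (SUP r\<in>{..<s}. G r)"

lemma sup_above_cong: "(\<And>s. r < s \<Longrightarrow> F s = G s) \<Longrightarrow> sup_above F r = sup_above G r"
  unfolding sup_above_def by (rule SUP_cong) auto

lemma sup_below_cong: "(\<And>r. r < s \<Longrightarrow> F r = G r) \<Longrightarrow> sup_below F s = sup_below G s"
  unfolding sup_below_def by (rule SUP_cong) auto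

lemma sup_above_mono: "(\<And>s. F s \<le> G s) \<Longrightarrow> sup_above F r \<le> sup_above G r"
  unfolding sup_above_def by (rule SUP_mono')

lemma sup_below_mono: "(\<And>r. F r \<le> G r) \<Longrightarrow> sup_below F s \<le> sup_below G s"
  unfolding sup_below_def by (rule SUP_mono')

lemma sup_above_idem:
  "sup_above (sup_above F) = sup_above (F :: 'b::dense_linorder \<Rightarrow> 'a::complete_lattice)"
proof (intro ext antisym)
  fix r :: 'b
  show "sup_above (sup_above F) r \<le> sup_above F r"
    unfolding sup_above_def by (intro SUP_least SUP_subset_mono) auto
  show "sup_above F r \<le> sup_above (sup_above F) r"
    unfolding sup_above_def
  proof (rule SUP_least)
    fix u assume "u \<in> {r<..}"
    then obtain s where "r < s" "s < u" using dense by auto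
    then have "F u \<le> (SUP s\<in>{s<..}. F s)" by (auto intro: SUP_upper)
    also have "\<dots> \<le> (SUP s\<in>{r<..}. SUP u\<in>{s<..}. F u)" using \<open>r < s\<close> by (auto intro: SUP_upper)
    finally show "F u \<le> \<dots>" .
  qed
qed

lemma sup_below_idem:
  "sup_below (sup_below G) = sup_below (G :: 'b::dense_linorder \<Rightarrow> 'a::complete_lattice)"
proof (intro ext antisym)
  fix s :: 'b
  show "sup_below (sup_below G) s \<le> sup_below G s"
    unfolding sup_below_def by (intro SUP_least SUP_subset_mono) auto
  show "sup_below G s \<le> sup_below (sup_below G) s"
    unfolding sup_below_def
  proof (rule SUP_least)
    fix u assume "u \<in> {..<s}"
    then obtain r where "u < r" "r < s" using dense by auto
    then have "G u \<le> (SUP u\<in>{..<r}. G u)" by (auto intro: SUP_upper)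
    also have "\<dots> \<le> (SUP r\<in>{..<s}. SUP u\<in>{..<r}. G u)" using \<open>r < s\<close> by (auto intro: SUP_upper)
    finally show "G u \<le> \<dots>" .
  qed
qed

lemma ICbar_iff:
  "f \<in> ICbar \<longleftrightarrow> (\<forall>r s. s \<le> r \<longrightarrow> inf (fst f r) (snd f s) = bot)
                  \<and> sup_above (fst f) = fst f \<and> sup_below (snd f) = snd f"
  unfolding ICbar_def sup_above_def sup_below_def greaterThan_def lessThan_def setcompr_eq_image
    fun_eq_iff
  by (auto simp only: eq_commute)

lemma frame_inf_SUP_SUP:
  assumes "frame_law TYPE('a::complete_lattice)"
  shows "inf (SUP i\<in>I. F i) (SUP j\<in>J. G j) = (SUP i\<in>I. SUP j\<in>J. inf (F i) (G j) :: 'a)"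
proof -
  have distrib: "inf a (Sup S) = (SUP s\<in>S. inf a s)" for a :: 'a and S
    using assms unfolding frame_law_def by blast
  have "inf (SUP i\<in>I. F i) (SUP j\<in>J. G j) = (SUP j\<in>J. inf (G j) (SUP i\<in>I. F i))"
    by (simp add: distrib inf_commute image_image)
  also have "\<dots> = (SUP j\<in>J. SUP i\<in>I. inf (F i) (G j))"
    by (simp add: distrib inf_commute image_image)
  finally show ?thesis by (simp add: SUP_commute[of _ J])
qed

lemma sup_above_inf_sup_below_eq_bot:
  assumes "frame_law TYPE('a::complete_lattice)"
    and "\<And>a b. b < a \<Longrightarrow> inf (F a) (G b) = (bot :: 'a)" and "s \<le> r"
  shows "inf (sup_above F r) (sup_below G s) = bot"
  using assms(2,3) unfolding sup_above_def sup_below_def frame_inf_SUP_SUP[OF assms(1)]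
  by (simp add: less_le_trans le_less_trans)

definition push_squash :: "(rat \<Rightarrow> 'a::complete_lattice) \<Rightarrow> rat \<Rightarrow> 'a" where
  "push_squash F s = (SUP t\<in>squash -` {s}. F t)"

lemma push_squash_squash [simp]: "push_squash F (squash t) = F t"
proof -
  have "squash -` {squash t} = {t}"
    using strict_mono_imp_inj_on[OF squash_strict_mono] by (auto dest: injD)
  then show ?thesis by (simp add: push_squash_def)
qed

lemma push_squash_outside: "s \<notin> {-1<..<1} \<Longrightarrow> push_squash F s = bot"
  unfolding push_squash_def using range_squash by auto

lemma push_squash_comp:
  "push_squash (F \<circ> squash) s = (if s \<in> {-1<..<1} then F s else bot)"
proof (cases "s \<in> {-1<..<1}")
  case True
  then obtain t where "s = squash t" using range_squash by blast
  then show ?thesis using True by simp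
qed (auto simp: push_squash_outside)

lemma greaterThan_squash: "{squash t<..} = squash ` {t<..} \<union> {1..}"
proof -
  have "squash ` {t<..} = {squash t<..<1}"
  proof (intro equalityI subsetI)
    fix y assume "y \<in> squash ` {t<..}"
    then show "y \<in> {squash t<..<1}" using squash_bounds by auto
  next
    fix y assume y: "y \<in> {squash t<..<1}"
    then have "y \<in> range squash" using squash_bounds(1)[of t] range_squash by auto
    then obtain u where "y = squash u" by blast
    with y show "y \<in> squash ` {t<..}" by auto
  qed
  then show ?thesis using squash_bounds(2)[of t] by auto
qed

lemma lessThan_squash: "{..<squash t} = squash ` {..<t} \<union> {..-1}"
proof -
  have "squash ` {..<t} = {-1<..<squash t}"
  proof (intro equalityI subsetI)
    fix y assume "y \<in> squash ` {..<t}"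
    then show "y \<in> {-1<..<squash t}" using squash_bounds by auto
  next
    fix y assume y: "y \<in> {-1<..<squash t}"
    then have "y \<in> range squash" using squash_bounds(2)[of t] range_squash by auto
    then obtain u where "y = squash u" by blast
    with y show "y \<in> squash ` {..<t}" by auto
  qed
  then show ?thesis using squash_bounds(1)[of t] by auto
qed

lemma sup_above_push_squash: "sup_above (push_squash F) (squash t) = sup_above F t"
  unfolding sup_above_def greaterThan_squash SUP_union
  by (simp add: image_comp push_squash_outside)

lemma sup_below_push_squash: "sup_below (push_squash G) (squash t) = sup_below G t"
  unfolding sup_below_def lessThan_squash SUP_union
  by (simp add: image_comp push_squash_outside)

lemma push_squash_mono: "(\<And>t. F t \<le> G t) \<Longrightarrow> push_squash F s \<le> push_squash G s"
  unfolding push_squash_def by (rule SUP_mono')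

lemma push_squash_disjoint:
  assumes "\<And>t u. u < t \<Longrightarrow> inf (F t) (G u) = bot" and "b < a"
  shows "inf (push_squash F a) (push_squash G b) = bot"
proof (cases "a \<in> range squash \<and> b \<in> range squash")
  case True
  then obtain t u where "a = squash t" "b = squash u" by blast
  then show ?thesis using assms by simp
qed (auto simp: range_squash push_squash_outside)

definition IC_interval :: "rat \<Rightarrow> rat \<Rightarrow> ('a::complete_lattice) genmap set" where
  "IC_interval p q = {g \<in> IC. IC_le (const_pr p) g \<and> IC_le g (const_pr q)}"

lemma const_pr_IC_le_iff:
  "IC_le (const_pr q) g \<longleftrightarrow> (\<forall>r<q. fst g r = top) \<and> (\<forall>s\<le>q. snd g s = bot)"
  unfolding IC_le_def const_pr_def by (auto simp: top_le bot_unique not_less)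

lemma IC_le_const_pr_iff:
  "IC_le g (const_pr q) \<longleftrightarrow> (\<forall>r\<ge>q. fst g r = bot) \<and> (\<forall>s>q. snd g s = top)"
  unfolding IC_le_def const_pr_def by (auto simp: top_le bot_unique not_less)

definition compress :: "('a::complete_lattice) genmap \<Rightarrow> 'a genmap" where
  "compress f = (sup_above (\<lambda>s. if s \<le> -1 then top else push_squash (fst f) s),
                 sup_below (\<lambda>s. if 1 \<le> s then top else push_squash (snd f) s))"

definition uncompress :: "('a::complete_lattice) genmap \<Rightarrow> 'a genmap" where
  "uncompress g = (fst g \<circ> squash, snd g \<circ> squash)"

lemma compress_fst_top: "r < -1 \<Longrightarrow> fst (compress f) r = top"
  unfolding compress_def fst_conv sup_above_def by (intro top_le SUP_upper2[of "-1"]) simp_all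

lemma compress_fst_bot: "1 \<le> r \<Longrightarrow> fst (compress f) r = bot"
  unfolding compress_def sup_above_def by (auto simp: push_squash_outside)

lemma compress_snd_top: "1 < s \<Longrightarrow> snd (compress f) s = top"
  unfolding compress_def snd_conv sup_below_def by (intro top_le SUP_upper2[of 1]) simp_all

lemma compress_snd_bot: "s \<le> -1 \<Longrightarrow> snd (compress f) s = bot"
  unfolding compress_def sup_below_def by (auto simp: push_squash_outside)

lemma compress_ICbar:
  assumes "frame_law TYPE('a::complete_lattice)" and f: "(f :: 'a genmap) \<in> ICbar"
  shows "compress f \<in> ICbar"
proof -
  have disj: "inf (fst f t) (snd f u) = bot" if "u < t" for t u
    using f that by (simp add: ICbar_iff)
  have "inf (if a \<le> -1 then top else push_squash (fst f) a)
            (if 1 \<le> b then top else push_squash (snd f) b) = bot" if "b < a" for a b :: rat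
  proof -
    have "inf (push_squash (fst f) a) (push_squash (snd f) b) = bot"
      using disj \<open>b < a\<close> by (rule push_squash_disjoint)
    with \<open>b < a\<close> show ?thesis by (auto simp: push_squash_outside)
  qed
  then show ?thesis
    unfolding ICbar_iff compress_def fst_conv snd_conv sup_above_idem sup_below_idem
    by (auto intro: sup_above_inf_sup_below_eq_bot[OF assms(1)])
qed

lemma compress_mem_IC_interval:
  assumes "frame_law TYPE('a::complete_lattice)" and "(f :: 'a genmap) \<in> ICbar"
  shows "compress f \<in> IC_interval (-1) 1"
proof -
  have "fst (compress f) (-2) = top" "snd (compress f) 2 = top"
    by (simp_all add: compress_fst_top compress_snd_top)
  then have "Sup (range (fst (compress f))) = top" "Sup (range (snd (compress f))) = top"
    by (metis rangeI Sup_upper top_le)+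
  then show ?thesis
    using compress_ICbar[OF assms]
    by (simp add: IC_interval_def IC_def const_pr_IC_le_iff IC_le_const_pr_iff
        compress_fst_top compress_fst_bot compress_snd_top compress_snd_bot)
qed

lemma uncompress_compress:
  assumes "f \<in> ICbar"
  shows "uncompress (compress f) = f"
proof (rule prod_eqI)
  have "fst (compress f) (squash t) = sup_above (push_squash (fst f)) (squash t)" for t
    unfolding compress_def using squash_bounds(1)[of t] by (auto intro!: sup_above_cong)
  then show "fst (uncompress (compress f)) = fst f"
    using assms by (simp add: uncompress_def ICbar_iff sup_above_push_squash fun_eq_iff)
  have "snd (compress f) (squash t) = sup_below (push_squash (snd f)) (squash t)" for t
    unfolding compress_def using squash_bounds(2)[of t] by (auto intro!: sup_below_cong)
  then show "snd (uncompress (compress f)) = snd f"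
    using assms by (simp add: uncompress_def ICbar_iff sup_below_push_squash fun_eq_iff)
qed

lemma push_squash_uncompress:
  assumes "g \<in> IC_interval (-1) 1"
  shows "-1 < s \<Longrightarrow> push_squash (fst (uncompress g)) s = fst g s"
    and "s < 1 \<Longrightarrow> push_squash (snd (uncompress g)) s = snd g s"
  using assms
  by (auto simp: uncompress_def push_squash_comp IC_interval_def const_pr_IC_le_iff
      IC_le_const_pr_iff)

lemma uncompress_ICbar:
  assumes g: "g \<in> IC_interval (-1) 1"
  shows "uncompress g \<in> ICbar"
  unfolding ICbar_iff
proof (intro conjI allI impI ext)
  have "g \<in> ICbar" using g by (simp add: IC_interval_def IC_def)
  then show "inf (fst (uncompress g) r) (snd (uncompress g) s) = bot" if "s \<le> r" for r s
    using that by (simp add: uncompress_def ICbar_iff)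
  fix t
  have "sup_above (fst (uncompress g)) t = sup_above (push_squash (fst (uncompress g))) (squash t)"
    by (simp add: sup_above_push_squash)
  also have "\<dots> = sup_above (fst g) (squash t)"
    using squash_bounds(1)[of t] push_squash_uncompress[OF g] by (intro sup_above_cong) simp
  finally show "sup_above (fst (uncompress g)) t = fst (uncompress g) t"
    using \<open>g \<in> ICbar\<close> by (simp add: ICbar_iff uncompress_def)
  have "sup_below (snd (uncompress g)) t = sup_below (push_squash (snd (uncompress g))) (squash t)"
    by (simp add: sup_below_push_squash)
  also have "\<dots> = sup_below (snd g) (squash t)"
    using squash_bounds(2)[of t] push_squash_uncompress[OF g] by (intro sup_below_cong) simp
  finally show "sup_below (snd (uncompress g)) t = snd (uncompress g) t"
    using \<open>g \<in> ICbar\<close> by (simp add: ICbar_iff uncompress_def)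
qed

lemma compress_uncompress:
  assumes g: "g \<in> IC_interval (-1) 1"
  shows "compress (uncompress g) = g"
proof (rule prod_eqI; rule ext)
  have "g \<in> ICbar" using g by (simp add: IC_interval_def IC_def)
  fix r :: rat
  show "fst (compress (uncompress g)) r = fst g r"
  proof (cases "r < -1")
    case True
    then show ?thesis using g by (simp add: compress_fst_top IC_interval_def const_pr_IC_le_iff)
  next
    case False
    then have "fst (compress (uncompress g)) r = sup_above (fst g) r"
      unfolding compress_def fst_conv
      by (intro sup_above_cong) (simp add: push_squash_uncompress[OF g])
    then show ?thesis using \<open>g \<in> ICbar\<close> by (simp add: ICbar_iff)
  qed
  show "snd (compress (uncompress g)) r = snd g r"
  proof (cases "1 < r")
    case True
    then show ?thesis using g by (simp add: compress_snd_top IC_interval_def IC_le_const_pr_iff)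
  next
    case False
    then have "snd (compress (uncompress g)) r = sup_below (snd g) r"
      unfolding compress_def snd_conv
      by (intro sup_below_cong) (simp add: push_squash_uncompress[OF g])
    then show ?thesis using \<open>g \<in> ICbar\<close> by (simp add: ICbar_iff)
  qed
qed

lemma image_compress_ICbar:
  assumes "frame_law TYPE('a::complete_lattice)"
  shows "compress ` ICbar = (IC_interval (-1) 1 :: 'a genmap set)"
proof (intro equalityI subsetI)
  fix g :: "'a genmap" assume "g \<in> IC_interval (-1) 1"
  then show "g \<in> compress ` ICbar"
    using uncompress_ICbar compress_uncompress by (metis image_eqI)
qed (auto intro: compress_mem_IC_interval[OF assms])

lemma compress_mono: "IC_le f g \<Longrightarrow> IC_le (compress f) (compress g)"
  unfolding IC_le_def compress_def
  by (auto intro!: sup_above_mono sup_below_mono push_squash_mono)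

lemma uncompress_mono: "IC_le f g \<Longrightarrow> IC_le (uncompress f) (uncompress g)"
  unfolding IC_le_def uncompress_def by simp

lemma compress_IC_le_iff:
  assumes "f \<in> ICbar" "g \<in> ICbar"
  shows "IC_le (compress f) (compress g) \<longleftrightarrow> IC_le f g"
proof
  assume "IC_le (compress f) (compress g)"
  then have "IC_le (uncompress (compress f)) (uncompress (compress g))" by (rule uncompress_mono)
  then show "IC_le f g" by (simp add: uncompress_compress assms)
qed (rule compress_mono)

theorem proposition3p1:
  assumes "frame_law TYPE('a::complete_lattice)"
  shows "\<exists>\<phi> :: 'a genmap \<Rightarrow> 'a genmap.
           bij_betw \<phi> ICbar {g \<in> IC. IC_le (const_pr (-1)) g \<and> IC_le g (const_pr 1)}
         \<and> (\<forall>f\<in>ICbar. \<forall>g\<in>ICbar. IC_le f g \<longleftrightarrow> IC_le (\<phi> f) (\<phi> g))"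
  unfolding IC_interval_def[symmetric]
proof (intro exI[of _ compress] conjI ballI)
  have "inj_on compress (ICbar :: 'a genmap set)"
    using uncompress_compress by (metis inj_on_inverseI)
  then show "bij_betw compress ICbar (IC_interval (-1) 1 :: 'a genmap set)"
    using image_compress_ICbar[OF assms] by (simp add: bij_betw_def)
qed (simp add: compress_IC_le_iff)

end
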